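(* Let $(\mathbb{X},d)$ be a geodesic metric space and let $\varrho$ be a continuous admissible radius function in a bounded domain $\Omega\subset\mathbb{X}$. Let $u\in C(\overline\Omega)$ and let $K\subset\Omega$ be compact. If $\omega$ is a concave modulus of continuity for $u$ on $\widetilde K$ (i.e. $|u(s)-u(t)|\le\omega(d(s,t))$ for all $s,t\in\widetilde K$), then for all $x,y\in K$, $$|\mathcal{S}u(x)-\mathcal{S}u(y)|\leq\omega\left(\widehat\omega_\varrho(d(x,y))\right).$$
   Context: A metric space is geodesic if any two points $x,y$ are joined by a curve of length $d(x,y)$. An admissible radius function in $\Omega$ is $\varrho\in C(\overline\Omega)$, $\varrho\ge0$, with $0<\varrho(x)\leq\mathrm{dist}(x,\partial\Omega)$ for $x\in\Omega$ and $\varrho=0$ exactly on $\partial\Omega$. $B_x=\overline{B}(x,\varrho(x))$, $\widetilde K=\bigcup_{x\in K}B_x$, and $\mathcal{S}u(x)=\frac12(\sup_{B_x}u+\inf_{B_x}u)$. A modulus of continuity is a nondecreasing continuous $\omega:[0,\mathrm{diam}\,\Omega]\to[0,\infty)$ with $\omega(0)=0$. Fix a concave modulus of continuity $\omega_{\varrho,\Omega}$ for $\varrho$ on $\Omega$ with $\omega_{\varrho,\Omega}(\mathrm{diam}\,\Omega)\le\mathrm{diam}\,\Omega$; set $\widehat\omega_\varrho(t)=t$ if $\omega_{\varrho,\Omega}(t)\le t$ for all $t\in[0,\mathrm{diam}\,\Omega]$, and otherwise $\widehat\omega_\varrho(t)=\frac{\mathrm{diam}\,\Omega}{\omega_{\varrho,\Omega}(\mathrm{diam}\,\Omega)}\omega_{\varrho,\Omega}(t)$.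 *)

theory Defs
  imports "HOL-Analysis.Analysis"
begin

text \<open>Length of a curve \<gamma> : [a,b] \<rightarrow> X in a metric space: supremum over all
  partitions a = t_0 \<le> t_1 \<le> ... \<le> t_n = b of the sums of distances (in ereal,
  so that non-rectifiable curves have length \<infinity>).\<close>
definition curve_length :: "(real \<Rightarrow> 'a::metric_space) \<Rightarrow> real \<Rightarrow> real \<Rightarrow> ereal" where
  "curve_length \<gamma> a b =
     Sup {ereal (\<Sum>i<n. dist (\<gamma> (t i)) (\<gamma> (t (Suc i)))) | n t.
            t 0 = a \<and> t n = b \<and> (\<forall>i<n. t i \<le> t (Suc i))}"

definition geodesic_space :: "'a::metric_space itself \<Rightarrow> bool" where
  "geodesic_space _ \<longleftrightarrow>
     (\<forall>x y::'a. \<exists>\<gamma> a b. a \<le> b \<and> continuous_on {a..b} \<gamma> \<and> \<gamma> a = x \<and> \<gamma> b = y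
        \<and> curve_length \<gamma> a b = ereal (dist x y))"

definition domain :: "'a::metric_space set \<Rightarrow> bool" where
  "domain \<Omega> \<longleftrightarrow> open \<Omega> \<and> connected \<Omega> \<and> \<Omega> \<noteq> {}"

text \<open>Admissible radius function (dist(x, \<partial>\<Omega>) is the infimum over the boundary,
  with the convention inf of the empty set = +\<infinity>).\<close>
definition admissible_radius :: "'a::metric_space set \<Rightarrow> ('a \<Rightarrow> real) \<Rightarrow> bool" where
  "admissible_radius \<Omega> \<rho> \<longleftrightarrow>
     continuous_on (closure \<Omega>) \<rho> \<and>
     (\<forall>x\<in>closure \<Omega>. 0 \<le> \<rho> x) \<and>
     (\<forall>x\<in>\<Omega>. 0 < \<rho> x \<and> (\<forall>z\<in>frontier \<Omega>. \<rho> x \<le> dist x z)) \<and>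
     (\<forall>x\<in>closure \<Omega>. \<rho> x = 0 \<longleftrightarrow> x \<in> frontier \<Omega>)"

definition ball_of :: "('a::metric_space \<Rightarrow> real) \<Rightarrow> 'a \<Rightarrow> 'a set" where
  "ball_of \<rho> x = cball x (\<rho> x)"

definition tilde :: "('a::metric_space \<Rightarrow> real) \<Rightarrow> 'a set \<Rightarrow> 'a set" where
  "tilde \<rho> K = (\<Union>x\<in>K. ball_of \<rho> x)"

definition S_op :: "('a::metric_space \<Rightarrow> real) \<Rightarrow> ('a \<Rightarrow> real) \<Rightarrow> 'a \<Rightarrow> real" where
  "S_op \<rho> u x = (Sup (u ` ball_of \<rho> x) + Inf (u ` ball_of \<rho> x)) / 2"

definition modulus_of_continuity :: "real \<Rightarrow> (real \<Rightarrow> real) \<Rightarrow> bool" where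
  "modulus_of_continuity D \<omega> \<longleftrightarrow>
     mono_on {0..D} \<omega> \<and> continuous_on {0..D} \<omega> \<and> \<omega> 0 = 0 \<and> (\<forall>t\<in>{0..D}. 0 \<le> \<omega> t)"

definition omega_hat :: "real \<Rightarrow> (real \<Rightarrow> real) \<Rightarrow> real \<Rightarrow> real" where
  "omega_hat D \<omega>\<rho> t =
     (if \<forall>s\<in>{0..D}. \<omega>\<rho> s \<le> s then t else D / \<omega>\<rho> D * \<omega>\<rho> t)"

end

theory Submission
  imports Defs
begin

text \<open>A point z of the ball B_x has, by walking along a geodesic from y towards z, a partner
  z' in B_y with d(z,z') \<le> max 0 (d(x,y) + \<rho>(x) - \<rho>(y)). Hence the supremum and the infimum
  of u over B_x and over B_y differ by at most \<omega> of that quantity, and averaging the two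
  directions gives |Su(x) - Su(y)| \<le> (\<omega>(c1) + \<omega>(c2))/2 \<le> \<omega>((c1 + c2)/2) by concavity.
  Finally (c1 + c2)/2 \<le> max d(x,y) |\<rho>(x) - \<rho>(y)|, which is at most \<omega>-hat(d(x,y)): the
  rescaled concave modulus of \<rho> dominates both the identity and the modulus itself.\<close>

lemma dist_add_dist_le_curve_length:
  fixes \<gamma> :: "real \<Rightarrow> 'a::metric_space"
  assumes "a \<le> t" "t \<le> b"
  shows "ereal (dist (\<gamma> a) (\<gamma> t) + dist (\<gamma> t) (\<gamma> b)) \<le> curve_length \<gamma> a b"
proof -
  define p where "p = (\<lambda>i::nat. if i = 0 then a else if i = 1 then t else b)"
  have "(\<Sum>i<2. dist (\<gamma> (p i)) (\<gamma> (p (Suc i)))) = dist (\<gamma> a) (\<gamma> t) + dist (\<gamma> t) (\<gamma> b)"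
    by (simp add: p_def numeral_2_eq_2)
  moreover have "p 0 = a \<and> p 2 = b \<and> (\<forall>i<2. p i \<le> p (Suc i))"
    using assms by (auto simp: p_def less_2_cases_iff)
  ultimately show ?thesis
    unfolding curve_length_def by (intro Sup_upper CollectI exI[of _ 2] exI[of _ p]) simp
qed

lemma geodesic_spaceE:
  fixes x y :: "'a::metric_space"
  assumes "geodesic_space TYPE('a)"
  obtains \<gamma> :: "real \<Rightarrow> 'a" and a b :: real
  where "a \<le> b" "continuous_on {a..b} \<gamma>" "\<gamma> a = x" "\<gamma> b = y"
    "\<And>t. a \<le> t \<Longrightarrow> t \<le> b \<Longrightarrow> dist x (\<gamma> t) + dist (\<gamma> t) y = dist x y"
proof -
  obtain \<gamma> a b where \<gamma>: "a \<le> b" "continuous_on {a..b} \<gamma>" "\<gamma> a = x" "\<gamma> b = y"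
    "curve_length \<gamma> a b = ereal (dist x y)"
    using assms unfolding geodesic_space_def by blast
  show ?thesis
  proof (rule that[OF \<gamma>(1-4)])
    fix t assume "a \<le> t" "t \<le> b"
    with dist_add_dist_le_curve_length[OF this, of \<gamma>] \<gamma> dist_triangle[of x y "\<gamma> t"]
    show "dist x (\<gamma> t) + dist (\<gamma> t) y = dist x y"
      by (simp add: dist_commute)
  qed
qed

lemma geodesic_point_at_distance:
  fixes y z :: "'a::metric_space"
  assumes "geodesic_space TYPE('a)" "0 \<le> s"
  obtains z' where "dist y z' \<le> s" "dist z z' \<le> max 0 (dist y z - s)"
proof (cases "dist y z \<le> s")
  case True
  then show ?thesis using that[of z] by simp
next
  case False
  obtain \<gamma> :: "real \<Rightarrow> 'a" and a b where \<gamma>: "a \<le> b" "continuous_on {a..b} \<gamma>" "\<gamma> a = y" "\<gamma> b = z"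
    "\<And>t. a \<le> t \<Longrightarrow> t \<le> b \<Longrightarrow> dist y (\<gamma> t) + dist (\<gamma> t) z = dist y z"
    by (rule geodesic_spaceE[OF assms(1), of y z]) blast
  have "continuous_on {a..b} (\<lambda>t. dist y (\<gamma> t))"
    by (intro continuous_intros \<gamma>(2))
  then obtain t where t: "a \<le> t" "t \<le> b" "dist y (\<gamma> t) = s"
    using IVT'[of "\<lambda>t. dist y (\<gamma> t)" a s b] \<gamma> False assms(2) by auto
  show ?thesis
    using \<gamma>(5)[OF t(1,2)] t by (intro that[of "\<gamma> t"]) (auto simp: dist_commute)
qed

lemma geodesic_cball_transport:
  fixes p q z :: "'a::metric_space"
  assumes "geodesic_space TYPE('a)" "0 \<le> r" "z \<in> cball p s"
  obtains z' where "z' \<in> cball q r" "dist z z' \<le> max 0 (dist p q + s - r)"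
proof -
  obtain z' where z': "dist q z' \<le> r" "dist z z' \<le> max 0 (dist q z - r)"
    using geodesic_point_at_distance[OF assms(1,2)] by blast
  have "dist q z \<le> dist p q + s"
    using assms(3) dist_triangle[of q z p] by (simp add: dist_commute)
  then show ?thesis
    using z' by (intro that[of z']) auto
qed

text \<open>A geodesic from the centre to a point outside the closure would cross the frontier
  at distance less than r from the centre.\<close>

lemma geodesic_cball_subset_closure:
  fixes \<Omega> :: "'a::metric_space set"
  assumes "geodesic_space TYPE('a)" "x \<in> \<Omega>" "\<forall>w\<in>frontier \<Omega>. r \<le> dist x w"
  shows "cball x r \<subseteq> closure \<Omega>"
proof
  fix z assume z: "z \<in> cball x r"
  show "z \<in> closure \<Omega>"
  proof (rule ccontr)
    assume nz: "z \<notin> closure \<Omega>"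
    obtain \<gamma> :: "real \<Rightarrow> 'a" and a b where \<gamma>: "a \<le> b" "continuous_on {a..b} \<gamma>" "\<gamma> a = x" "\<gamma> b = z"
      "\<And>t. a \<le> t \<Longrightarrow> t \<le> b \<Longrightarrow> dist x (\<gamma> t) + dist (\<gamma> t) z = dist x z"
      by (rule geodesic_spaceE[OF assms(1), of x z]) blast
    have "connected (\<gamma> ` {a..b})"
      by (intro connected_continuous_image \<gamma>(2)) simp
    moreover have "x \<in> \<gamma> ` {a..b} \<inter> \<Omega>" "z \<in> \<gamma> ` {a..b} - \<Omega>"
      using \<gamma>(1,3,4) assms(2) nz closure_subset by (auto intro!: image_eqI)
    ultimately have "\<gamma> ` {a..b} \<inter> frontier \<Omega> \<noteq> {}"
      using connected_Int_frontier[of "\<gamma> ` {a..b}" \<Omega>] by blast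
    then obtain t where t: "a \<le> t" "t \<le> b" "\<gamma> t \<in> frontier \<Omega>"
      by auto
    moreover have "r \<le> dist x (\<gamma> t)"
      using assms(3) t(3) by blast
    moreover have "dist x z \<le> r"
      using z by simp
    ultimately have "dist (\<gamma> t) z \<le> 0"
      using \<gamma>(5)[OF t(1,2)] by linarith
    then have "\<gamma> t = z" by simp
    with t nz show False by (simp add: frontier_def)
  qed
qed

lemma ball_of_subset_closure:
  assumes "geodesic_space TYPE('a::metric_space)" "admissible_radius \<Omega> \<rho>" "x \<in> \<Omega>"
  shows "ball_of \<rho> x \<subseteq> closure (\<Omega> :: 'a set)"
proof -
  have "\<forall>w\<in>frontier \<Omega>. \<rho> x \<le> dist x w"
    using assms(2,3) unfolding admissible_radius_def by blast
  then show ?thesis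
    unfolding ball_of_def by (rule geodesic_cball_subset_closure[OF assms(1,3)])
qed

lemma centre_in_ball_of:
  assumes "admissible_radius \<Omega> \<rho>" "x \<in> \<Omega>"
  shows "x \<in> ball_of \<rho> x"
proof -
  have "0 < \<rho> x"
    using assms unfolding admissible_radius_def by blast
  then show ?thesis
    by (simp add: ball_of_def less_imp_le)
qed

lemma dist_le_diameter_ball_of:
  assumes "geodesic_space TYPE('a::metric_space)" "bounded \<Omega>" "admissible_radius \<Omega> \<rho>"
    and "p \<in> \<Omega>" "q \<in> \<Omega>" "z \<in> ball_of \<rho> p" "z' \<in> ball_of \<rho> q"
  shows "dist z z' \<le> diameter (\<Omega> :: 'a set)"
proof -
  have "z \<in> closure \<Omega>" "z' \<in> closure \<Omega>"
    using ball_of_subset_closure[OF assms(1,3)] assms(4-7) by blast+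
  then show ?thesis
    using diameter_bounded_bound[OF bounded_closure[OF assms(2)]] diameter_closure[OF assms(2)]
    by simp
qed

lemma SUP_INF_le_transport:
  fixes u :: "'a \<Rightarrow> real"
  assumes "A \<noteq> {}" "bounded (u ` B)" "\<forall>z\<in>A. \<exists>z'\<in>B. \<bar>u z - u z'\<bar> \<le> a"
  shows "Sup (u ` A) \<le> Sup (u ` B) + a" "Inf (u ` B) \<le> Inf (u ` A) + a"
proof -
  show "Sup (u ` A) \<le> Sup (u ` B) + a"
  proof (rule cSUP_least[OF assms(1)])
    fix z assume "z \<in> A"
    then obtain z' where "z' \<in> B" "\<bar>u z - u z'\<bar> \<le> a" using assms(3) by blast
    moreover have "u z' \<le> Sup (u ` B)"
      using cSUP_upper[OF \<open>z' \<in> B\<close> bounded_imp_bdd_above[OF assms(2)]] .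
    ultimately show "u z \<le> Sup (u ` B) + a" by linarith
  qed
  have "Inf (u ` B) - a \<le> Inf (u ` A)"
  proof (rule cINF_greatest[OF assms(1)])
    fix z assume "z \<in> A"
    then obtain z' where "z' \<in> B" "\<bar>u z - u z'\<bar> \<le> a" using assms(3) by blast
    moreover have "Inf (u ` B) \<le> u z'"
      using cINF_lower[OF bounded_imp_bdd_below[OF assms(2)] \<open>z' \<in> B\<close>] .
    ultimately show "Inf (u ` B) - a \<le> u z" by linarith
  qed
  then show "Inf (u ` B) \<le> Inf (u ` A) + a" by simp
qed

lemma midrange_diff_le:
  fixes u :: "'a \<Rightarrow> real"
  assumes "A \<noteq> {}" "B \<noteq> {}" "bounded (u ` A)" "bounded (u ` B)"
    and "\<forall>z\<in>A. \<exists>z'\<in>B. \<bar>u z - u z'\<bar> \<le> a" "\<forall>z\<in>B. \<exists>z'\<in>A. \<bar>u z - u z'\<bar> \<le> b"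
  shows "\<bar>(Sup (u ` A) + Inf (u ` A)) / 2 - (Sup (u ` B) + Inf (u ` B)) / 2\<bar> \<le> (a + b) / 2"
  using SUP_INF_le_transport[OF assms(1,4,5)] SUP_INF_le_transport[OF assms(2,3,6)]
  by (simp add: abs_le_iff field_simps)

lemma modulus_of_continuity_mono:
  assumes "modulus_of_continuity D \<omega>" "0 \<le> s" "s \<le> t" "t \<le> D"
  shows "\<omega> s \<le> \<omega> t"
  using assms unfolding modulus_of_continuity_def by (auto intro: mono_onD)

lemma concave_on_midpoint:
  fixes f :: "real \<Rightarrow> real"
  assumes "concave_on {0..D} f" "a \<in> {0..D}" "b \<in> {0..D}"
  shows "(f a + f b) / 2 \<le> f ((a + b) / 2)"
  using concave_onD[OF assms(1), of "1/2" a b] assms(2,3) by (simp add: field_simps)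

lemma omega_hat_bounds:
  assumes "modulus_of_continuity D \<omega>\<rho>" "concave_on {0..D} \<omega>\<rho>" "\<omega>\<rho> D \<le> D"
    and "0 \<le> d" "d \<le> D"
  shows "d \<le> omega_hat D \<omega>\<rho> d" "\<omega>\<rho> d \<le> omega_hat D \<omega>\<rho> d" "omega_hat D \<omega>\<rho> d \<le> D"
proof -
  have "d \<le> omega_hat D \<omega>\<rho> d \<and> \<omega>\<rho> d \<le> omega_hat D \<omega>\<rho> d \<and> omega_hat D \<omega>\<rho> d \<le> D"
  proof (cases "\<forall>s\<in>{0..D}. \<omega>\<rho> s \<le> s")
    case True
    then show ?thesis using assms(4,5) by (simp add: omega_hat_def)
  next
    case False
    then obtain s where s: "0 \<le> s" "s \<le> D" "s < \<omega>\<rho> s" by auto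
    define W where "W = \<omega>\<rho> D"
    have W: "0 < W" "W \<le> D"
      using modulus_of_continuity_mono[OF assms(1) s(1,2) order_refl] s assms(3) W_def by auto
    have hat: "omega_hat D \<omega>\<rho> d = D / W * \<omega>\<rho> d"
      unfolding omega_hat_def W_def using False by (simp only: if_False)
    have \<omega>\<rho>_d: "0 \<le> \<omega>\<rho> d" "\<omega>\<rho> d \<le> W"
      using assms(1,4,5) modulus_of_continuity_mono[OF assms(1,4,5) order_refl]
      unfolding W_def modulus_of_continuity_def by auto
    \<comment> \<open>the chord of the concave \<omega>\<rho> from 0 to D, where \<omega>\<rho> 0 = 0\<close>
    have "(1 - d/D) * \<omega>\<rho> 0 + (d/D) * \<omega>\<rho> D \<le> \<omega>\<rho> ((1 - d/D) *\<^sub>R 0 + (d/D) *\<^sub>R D)"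
      using W assms(4,5) by (intro concave_onD[OF assms(2)]) auto
    then have "d / D * W \<le> \<omega>\<rho> d"
      using assms(1) W unfolding modulus_of_continuity_def W_def by simp
    then have "d * W \<le> D * \<omega>\<rho> d"
      using W by (simp add: field_simps)
    then have "d \<le> D / W * \<omega>\<rho> d"
      using W by (simp add: field_simps)
    moreover have "D / W * \<omega>\<rho> d \<le> D"
      using W \<omega>\<rho>_d by (simp add: field_simps)
    moreover have "1 * \<omega>\<rho> d \<le> D / W * \<omega>\<rho> d"
      using W \<omega>\<rho>_d by (intro mult_right_mono) simp_all
    ultimately show ?thesis
      unfolding hat by simp
  qed
  then show "d \<le> omega_hat D \<omega>\<rho> d" "\<omega>\<rho> d \<le> omega_hat D \<omega>\<rho> d" "omega_hat D \<omega>\<rho> d \<le> D"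
    by auto
qed

lemma max_zero_add_max_zero_diff_le:
  fixes d \<delta> :: real
  assumes "0 \<le> d"
  shows "(max 0 (d + \<delta>) + max 0 (d - \<delta>)) / 2 \<le> max d \<bar>\<delta>\<bar>"
  using assms by (auto simp: max_def abs_if)

context
  fixes \<Omega> K :: "'a::metric_space set" and \<rho> u :: "'a \<Rightarrow> real" and \<omega> :: "real \<Rightarrow> real"
  assumes geodesic: "geodesic_space TYPE('a)"
    and bounded: "bounded \<Omega>"
    and admissible: "admissible_radius \<Omega> \<rho>"
    and K: "K \<subseteq> \<Omega>"
    and modulus: "modulus_of_continuity (diameter \<Omega>) \<omega>"
    and u_modulus: "\<forall>s\<in>tilde \<rho> K. \<forall>t\<in>tilde \<rho> K. \<bar>u s - u t\<bar> \<le> \<omega> (dist s t)"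
begin

lemma u_diff_le_modulus:
  assumes "p \<in> K" "q \<in> K" "z \<in> ball_of \<rho> p" "z' \<in> ball_of \<rho> q" "dist z z' \<le> c" "c \<le> diameter \<Omega>"
  shows "\<bar>u z - u z'\<bar> \<le> \<omega> c"
proof -
  have "z \<in> tilde \<rho> K" "z' \<in> tilde \<rho> K"
    using assms(1-4) unfolding tilde_def by blast+
  then have "\<bar>u z - u z'\<bar> \<le> \<omega> (dist z z')"
    using u_modulus by blast
  also have "\<dots> \<le> \<omega> c"
    by (rule modulus_of_continuity_mono[OF modulus zero_le_dist assms(5,6)])
  finally show ?thesis .
qed

lemma bounded_image_ball_of:
  assumes "p \<in> K"
  shows "bounded (u ` ball_of \<rho> p)"
proof -
  have p: "p \<in> \<Omega>" using assms K by blast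
  note centre = centre_in_ball_of[OF admissible p]
  have "u ` ball_of \<rho> p \<subseteq> cball (u p) (\<omega> (diameter \<Omega>))"
    using u_diff_le_modulus[OF assms assms centre _ _ order_refl]
      dist_le_diameter_ball_of[OF geodesic bounded admissible p p centre]
    by (auto simp: dist_real_def)
  then show ?thesis by (rule bounded_subset[OF bounded_cball])
qed

lemma ball_of_transport:
  assumes "p \<in> K" "q \<in> K"
  shows "\<forall>z\<in>ball_of \<rho> p. \<exists>z'\<in>ball_of \<rho> q. \<bar>u z - u z'\<bar>
    \<le> \<omega> (min (diameter \<Omega>) (max 0 (dist p q + \<rho> p - \<rho> q)))"
proof
  fix z assume z: "z \<in> ball_of \<rho> p"
  have "0 \<le> \<rho> q"
    using admissible assms(2) K closure_subset unfolding admissible_radius_def by blast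
  then obtain z' where z': "z' \<in> ball_of \<rho> q" "dist z z' \<le> max 0 (dist p q + \<rho> p - \<rho> q)"
    using geodesic_cball_transport[OF geodesic, of "\<rho> q" z p "\<rho> p" q] z
    unfolding ball_of_def by blast
  moreover have "dist z z' \<le> diameter \<Omega>"
    using dist_le_diameter_ball_of[OF geodesic bounded admissible _ _ z z'(1)] assms K by blast
  ultimately have "dist z z' \<le> min (diameter \<Omega>) (max 0 (dist p q + \<rho> p - \<rho> q))"
    by simp
  then have "\<bar>u z - u z'\<bar> \<le> \<omega> (min (diameter \<Omega>) (max 0 (dist p q + \<rho> p - \<rho> q)))"
    by (rule u_diff_le_modulus[OF assms z z'(1) _ min.cobounded1])
  with z'(1) show "\<exists>z'\<in>ball_of \<rho> q.
      \<bar>u z - u z'\<bar> \<le> \<omega> (min (diameter \<Omega>) (max 0 (dist p q + \<rho> p - \<rho> q)))"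
    by blast
qed

lemma S_op_diff_le:
  assumes "x \<in> K" "y \<in> K"
  shows "\<bar>S_op \<rho> u x - S_op \<rho> u y\<bar>
    \<le> (\<omega> (min (diameter \<Omega>) (max 0 (dist x y + \<rho> x - \<rho> y)))
      + \<omega> (min (diameter \<Omega>) (max 0 (dist y x + \<rho> y - \<rho> x)))) / 2"
  unfolding S_op_def
proof (rule midrange_diff_le)
  show "ball_of \<rho> x \<noteq> {}" "ball_of \<rho> y \<noteq> {}"
    using centre_in_ball_of[OF admissible] assms K by blast+
  show "bounded (u ` ball_of \<rho> x)" "bounded (u ` ball_of \<rho> y)"
    using bounded_image_ball_of assms by blast+
qed (rule ball_of_transport[OF assms], rule ball_of_transport[OF assms(2,1)])

end

theorem lemma3p12:
  fixes \<Omega> K :: "'a::metric_space set"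
    and \<rho> u :: "'a \<Rightarrow> real"
    and \<omega>\<rho> \<omega> :: "real \<Rightarrow> real"
  assumes "geodesic_space TYPE('a)"
    and "domain \<Omega>" and "bounded \<Omega>"
    and "admissible_radius \<Omega> \<rho>"
    and "modulus_of_continuity (diameter \<Omega>) \<omega>\<rho>"
    and "concave_on {0..diameter \<Omega>} \<omega>\<rho>"
    and "\<forall>x\<in>\<Omega>. \<forall>y\<in>\<Omega>. \<bar>\<rho> x - \<rho> y\<bar> \<le> \<omega>\<rho> (dist x y)"
    and "\<omega>\<rho> (diameter \<Omega>) \<le> diameter \<Omega>"
    and "continuous_on (closure \<Omega>) u"
    and "compact K" and "K \<subseteq> \<Omega>"
    and "modulus_of_continuity (diameter \<Omega>) \<omega>"
    and "concave_on {0..diameter \<Omega>} \<omega>"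
    and "\<forall>s\<in>tilde \<rho> K. \<forall>t\<in>tilde \<rho> K. \<bar>u s - u t\<bar> \<le> \<omega> (dist s t)"
  shows "\<forall>x\<in>K. \<forall>y\<in>K.
           \<bar>S_op \<rho> u x - S_op \<rho> u y\<bar> \<le> \<omega> (omega_hat (diameter \<Omega>) \<omega>\<rho> (dist x y))"
proof (intro ballI)
  fix x y assume xy: "x \<in> K" "y \<in> K"
  define D where "D = diameter \<Omega>"
  define c where "c p q = min D (max 0 (dist p q + \<rho> p - \<rho> q))" for p q
  define e where "e = omega_hat D \<omega>\<rho> (dist x y)"
  have S_bound: "\<bar>S_op \<rho> u x - S_op \<rho> u y\<bar> \<le> (\<omega> (c x y) + \<omega> (c y x)) / 2"
    using S_op_diff_le[OF assms(1,3,4,11,12,14) xy] by (simp only: c_def D_def)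
  have "x \<in> \<Omega>" "y \<in> \<Omega>"
    using xy assms(11) by blast+
  then have d: "0 \<le> dist x y" "dist x y \<le> D"
    using dist_le_diameter_ball_of[OF assms(1,3,4)] centre_in_ball_of[OF assms(4)]
    by (auto simp: D_def)
  have "0 \<le> D" using d by linarith
  then have c: "c x y \<in> {0..D}" "c y x \<in> {0..D}" by (auto simp: c_def)
  have "\<bar>\<rho> x - \<rho> y\<bar> \<le> \<omega>\<rho> (dist x y)"
    using assms(7,11) xy by blast
  then have "\<bar>\<rho> x - \<rho> y\<bar> \<le> e" "dist x y \<le> e" "e \<le> D"
    using omega_hat_bounds[OF assms(5,6,8)[folded D_def] d] unfolding e_def by linarith+
  then have "(c x y + c y x) / 2 \<le> e"
    using max_zero_add_max_zero_diff_le[OF d(1), of "\<rho> x - \<rho> y"]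
    by (auto simp: c_def dist_commute algebra_simps)
  then have "\<omega> ((c x y + c y x) / 2) \<le> \<omega> e"
    using c \<open>e \<le> D\<close> by (intro modulus_of_continuity_mono[OF assms(12)[folded D_def]]) auto
  then show "\<bar>S_op \<rho> u x - S_op \<rho> u y\<bar> \<le> \<omega> (omega_hat (diameter \<Omega>) \<omega>\<rho> (dist x y))"
    using S_bound concave_on_midpoint[OF assms(13)[folded D_def] c]
    unfolding e_def D_def by linarith
qed

end
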